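(* Let $E$ be a contact Riemannian Lie algebroid with associated almost contact Riemannian structure $(F_E,\xi,\eta,g_E)$. Then $\mathcal{L}_\xi\eta=0$, $\mathcal{L}_\xi(d_E\eta)=0$, and $(\mathcal{L}_{F_E(s_1)}\eta)(s_2)=(\mathcal{L}_{F_E(s_2)}\eta)(s_1)$ for all $s_1,s_2\in\Gamma(E)$.
   Context: A Lie algebroid $(E,\rho_E,[\cdot,\cdot]_E)$ over $M$ is a vector bundle with anchor $\rho_E:E\to TM$ and Lie bracket on $\Gamma(E)$ with $[s_1,fs_2]_E=f[s_1,s_2]_E+\rho_E(s_1)(f)s_2$. For a 1-form $\eta$, $(d_E\eta)(s_1,s_2)=\frac12\{\rho_E(s_1)(\eta(s_2))-\rho_E(s_2)(\eta(s_1))-\eta([s_1,s_2]_E)\}$. For $E$ of rank $2m+1$, an almost contact Riemannian structure $(F_E,\xi,\eta,g_E)$: endomorphism $F_E$, $\xi\in\Gamma(E)$, $\eta\in\Gamma(E^* )$, bundle metric $g_E$ with $F_E^2=-I_E+\eta\otimes\xi$, $\eta(\xi)=1$, $g_E(F_Es_1,F_Es_2)=g_E(s_1,s_2)-\eta(s_1)\eta(s_2)$; fundamental form $\Omega_E(s_1,s_2)=g_E(s_1,F_Es_2)$. $E$ is contact Riemannian if also $\eta\wedge(d_E\eta)^m$ vanishes nowhere and $d_E\eta=\Omega_E$. Lie derivatives: $(\mathcal{L}_s\eta)(s')=\rho_E(s)(\eta(s'))-\eta([s,s']_E)$; for a 2-form $\omega$, $(\mathcal{L}_s\omega)(s_1,s_2)=\rho_E(s)(\omega(s_1,s_2))-\omega([s,s_1]_E,s_2)-\omega(s_1,[s,s_2]_E)$.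 *)

theory Defs
  imports "HOL-Analysis.Analysis"
begin

text \<open>Algebraic model of a vector bundle E over M and its Lie algebroid structure.
  Points of M: type 'm.  Smooth functions: a set C of real functions on 'm.
  Sections of E: a set Gam of maps 'm \<Rightarrow> 'v (E embedded in a trivial bundle with
  fibre the real vector space 'v); the fibre E_x is the set of values s x of sections.\<close>

definition smul :: "('m \<Rightarrow> real) \<Rightarrow> ('m \<Rightarrow> 'v::real_vector) \<Rightarrow> ('m \<Rightarrow> 'v)" where
  "smul f s = (\<lambda>x. f x *\<^sub>R s x)"

definition fun_algebra :: "('m \<Rightarrow> real) set \<Rightarrow> bool" where
  "fun_algebra C \<longleftrightarrow> (\<forall>c. (\<lambda>x. c) \<in> C) \<and>
     (\<forall>f\<in>C. \<forall>h\<in>C. (\<lambda>x. f x + h x) \<in> C \<and> (\<lambda>x. f x * h x) \<in> C)"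

definition section_module ::
  "('m \<Rightarrow> real) set \<Rightarrow> ('m \<Rightarrow> 'v::real_vector) set \<Rightarrow> nat \<Rightarrow> bool" where
  "section_module C Gam n \<longleftrightarrow> (\<lambda>x. 0) \<in> Gam \<and>
     (\<forall>s\<in>Gam. \<forall>t\<in>Gam. (\<lambda>x. s x + t x) \<in> Gam) \<and>
     (\<forall>f\<in>C. \<forall>s\<in>Gam. smul f s \<in> Gam) \<and>
     (\<forall>x. dim {s x | s. s \<in> Gam} = n)"

definition lie_algebroid ::
  "('m \<Rightarrow> real) set \<Rightarrow> ('m \<Rightarrow> 'v::real_vector) set \<Rightarrow> nat
   \<Rightarrow> (('m \<Rightarrow> 'v) \<Rightarrow> ('m \<Rightarrow> real) \<Rightarrow> ('m \<Rightarrow> real))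
   \<Rightarrow> (('m \<Rightarrow> 'v) \<Rightarrow> ('m \<Rightarrow> 'v) \<Rightarrow> ('m \<Rightarrow> 'v)) \<Rightarrow> bool" where
  "lie_algebroid C Gam n \<rho> br \<longleftrightarrow>
     fun_algebra C \<and> section_module C Gam n \<and>
     \<comment> \<open>anchor: a C-linear map from sections to vector fields (derivations of C)\<close>
     (\<forall>s\<in>Gam. \<forall>f\<in>C. \<rho> s f \<in> C) \<and>
     (\<forall>s\<in>Gam. \<forall>t\<in>Gam. \<forall>h\<in>C. \<rho> (\<lambda>x. s x + t x) h = (\<lambda>x. \<rho> s h x + \<rho> t h x)) \<and>
     (\<forall>f\<in>C. \<forall>s\<in>Gam. \<forall>h\<in>C. \<rho> (smul f s) h = (\<lambda>x. f x * \<rho> s h x)) \<and>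
     (\<forall>s\<in>Gam. \<forall>f\<in>C. \<forall>h\<in>C. \<rho> s (\<lambda>x. f x + h x) = (\<lambda>x. \<rho> s f x + \<rho> s h x)) \<and>
     (\<forall>s\<in>Gam. \<forall>c. \<forall>f\<in>C. \<rho> s (\<lambda>x. c * f x) = (\<lambda>x. c * \<rho> s f x)) \<and>
     (\<forall>s\<in>Gam. \<forall>f\<in>C. \<forall>h\<in>C.
        \<rho> s (\<lambda>x. f x * h x) = (\<lambda>x. f x * \<rho> s h x + h x * \<rho> s f x)) \<and>
     \<comment> \<open>bracket: a real Lie bracket on sections\<close>
     (\<forall>s\<in>Gam. \<forall>t\<in>Gam. br s t \<in> Gam) \<and>
     (\<forall>s\<in>Gam. \<forall>t\<in>Gam. \<forall>u\<in>Gam. br (\<lambda>x. s x + t x) u = (\<lambda>x. br s u x + br t u x)) \<and>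
     (\<forall>c. \<forall>s\<in>Gam. \<forall>t\<in>Gam. br (smul (\<lambda>x. c) s) t = smul (\<lambda>x. c) (br s t)) \<and>
     (\<forall>s\<in>Gam. \<forall>t\<in>Gam. br s t = (\<lambda>x. - br t s x)) \<and>
     (\<forall>s\<in>Gam. \<forall>t\<in>Gam. \<forall>u\<in>Gam.
        br s (br t u) = (\<lambda>x. br (br s t) u x + br t (br s u) x)) \<and>
     \<comment> \<open>Leibniz rule\<close>
     (\<forall>s\<in>Gam. \<forall>t\<in>Gam. \<forall>f\<in>C.
        br s (smul f t) = (\<lambda>x. f x *\<^sub>R br s t x + \<rho> s f x *\<^sub>R t x)) \<and>
     \<comment> \<open>anchor is a Lie algebra morphism (a consequence of the above for genuine bundles)\<close>
     (\<forall>s\<in>Gam. \<forall>t\<in>Gam. \<forall>f\<in>C. \<rho> (br s t) f = (\<lambda>x. \<rho> s (\<rho> t f) x - \<rho> t (\<rho> s f) x))"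

definition one_form ::
  "('m \<Rightarrow> real) set \<Rightarrow> ('m \<Rightarrow> 'v::real_vector) set \<Rightarrow> (('m \<Rightarrow> 'v) \<Rightarrow> ('m \<Rightarrow> real)) \<Rightarrow> bool" where
  "one_form C Gam \<eta> \<longleftrightarrow> (\<forall>s\<in>Gam. \<eta> s \<in> C) \<and>
     (\<forall>s\<in>Gam. \<forall>t\<in>Gam. \<eta> (\<lambda>x. s x + t x) = (\<lambda>x. \<eta> s x + \<eta> t x)) \<and>
     (\<forall>f\<in>C. \<forall>s\<in>Gam. \<eta> (smul f s) = (\<lambda>x. f x * \<eta> s x))"

definition d_E ::
  "(('m \<Rightarrow> 'v) \<Rightarrow> ('m \<Rightarrow> real) \<Rightarrow> ('m \<Rightarrow> real)) \<Rightarrow> (('m \<Rightarrow> 'v) \<Rightarrow> ('m \<Rightarrow> 'v) \<Rightarrow> ('m \<Rightarrow> 'v))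
   \<Rightarrow> (('m \<Rightarrow> 'v) \<Rightarrow> ('m \<Rightarrow> real)) \<Rightarrow> ('m \<Rightarrow> 'v) \<Rightarrow> ('m \<Rightarrow> 'v) \<Rightarrow> ('m \<Rightarrow> real)" where
  "d_E \<rho> br \<eta> s1 s2 = (\<lambda>x. (1/2) * (\<rho> s1 (\<eta> s2) x - \<rho> s2 (\<eta> s1) x - \<eta> (br s1 s2) x))"

definition lie_deriv_1 ::
  "(('m \<Rightarrow> 'v) \<Rightarrow> ('m \<Rightarrow> real) \<Rightarrow> ('m \<Rightarrow> real)) \<Rightarrow> (('m \<Rightarrow> 'v) \<Rightarrow> ('m \<Rightarrow> 'v) \<Rightarrow> ('m \<Rightarrow> 'v))
   \<Rightarrow> ('m \<Rightarrow> 'v) \<Rightarrow> (('m \<Rightarrow> 'v) \<Rightarrow> ('m \<Rightarrow> real)) \<Rightarrow> ('m \<Rightarrow> 'v) \<Rightarrow> ('m \<Rightarrow> real)" where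
  "lie_deriv_1 \<rho> br s \<eta> s' = (\<lambda>x. \<rho> s (\<eta> s') x - \<eta> (br s s') x)"

definition lie_deriv_2 ::
  "(('m \<Rightarrow> 'v) \<Rightarrow> ('m \<Rightarrow> real) \<Rightarrow> ('m \<Rightarrow> real)) \<Rightarrow> (('m \<Rightarrow> 'v) \<Rightarrow> ('m \<Rightarrow> 'v) \<Rightarrow> ('m \<Rightarrow> 'v))
   \<Rightarrow> ('m \<Rightarrow> 'v) \<Rightarrow> (('m \<Rightarrow> 'v) \<Rightarrow> ('m \<Rightarrow> 'v) \<Rightarrow> ('m \<Rightarrow> real))
   \<Rightarrow> ('m \<Rightarrow> 'v) \<Rightarrow> ('m \<Rightarrow> 'v) \<Rightarrow> ('m \<Rightarrow> real)" where
  "lie_deriv_2 \<rho> br s \<omega> s1 s2 =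
     (\<lambda>x. \<rho> s (\<omega> s1 s2) x - \<omega> (br s s1) s2 x - \<omega> s1 (br s s2) x)"

definition almost_contact_riemannian ::
  "('m \<Rightarrow> real) set \<Rightarrow> ('m \<Rightarrow> 'v::real_vector) set \<Rightarrow> nat
   \<Rightarrow> (('m \<Rightarrow> 'v) \<Rightarrow> ('m \<Rightarrow> 'v)) \<Rightarrow> ('m \<Rightarrow> 'v) \<Rightarrow> (('m \<Rightarrow> 'v) \<Rightarrow> ('m \<Rightarrow> real))
   \<Rightarrow> (('m \<Rightarrow> 'v) \<Rightarrow> ('m \<Rightarrow> 'v) \<Rightarrow> ('m \<Rightarrow> real)) \<Rightarrow> bool" where
  "almost_contact_riemannian C Gam m F \<xi> \<eta> g \<longleftrightarrow>
     (\<forall>x. dim {s x | s. s \<in> Gam} = 2*m+1) \<and>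
     \<comment> \<open>F is a bundle endomorphism (C-linear on sections)\<close>
     (\<forall>s\<in>Gam. F s \<in> Gam) \<and>
     (\<forall>s\<in>Gam. \<forall>t\<in>Gam. F (\<lambda>x. s x + t x) = (\<lambda>x. F s x + F t x)) \<and>
     (\<forall>f\<in>C. \<forall>s\<in>Gam. F (smul f s) = smul f (F s)) \<and>
     \<xi> \<in> Gam \<and> one_form C Gam \<eta> \<and>
     \<comment> \<open>g is a bundle metric: C-bilinear, symmetric, positive definite\<close>
     (\<forall>s\<in>Gam. \<forall>t\<in>Gam. g s t \<in> C \<and> g s t = g t s) \<and>
     (\<forall>s\<in>Gam. \<forall>t\<in>Gam. \<forall>u\<in>Gam. g (\<lambda>x. s x + t x) u = (\<lambda>x. g s u x + g t u x)) \<and>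
     (\<forall>f\<in>C. \<forall>s\<in>Gam. \<forall>t\<in>Gam. g (smul f s) t = (\<lambda>x. f x * g s t x)) \<and>
     (\<forall>s\<in>Gam. \<forall>x. 0 \<le> g s s x \<and> (s x \<noteq> 0 \<longrightarrow> 0 < g s s x)) \<and>
     \<comment> \<open>F^2 = -I + eta (x) xi,  eta(xi) = 1,  compatibility\<close>
     (\<forall>s\<in>Gam. F (F s) = (\<lambda>x. - s x + \<eta> s x *\<^sub>R \<xi> x)) \<and>
     \<eta> \<xi> = (\<lambda>x. 1) \<and>
     (\<forall>s\<in>Gam. \<forall>t\<in>Gam. g (F s) (F t) = (\<lambda>x. g s t x - \<eta> s x * \<eta> t x))"

definition fundamental_form ::
  "(('m \<Rightarrow> 'v) \<Rightarrow> ('m \<Rightarrow> 'v)) \<Rightarrow> (('m \<Rightarrow> 'v) \<Rightarrow> ('m \<Rightarrow> 'v) \<Rightarrow> ('m \<Rightarrow> real))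
   \<Rightarrow> ('m \<Rightarrow> 'v) \<Rightarrow> ('m \<Rightarrow> 'v) \<Rightarrow> ('m \<Rightarrow> real)" where
  "fundamental_form F g s1 s2 = g s1 (F s2)"

text \<open>Value of the (2m+1)-form eta \<and> (omega)^m on sections ss 0, ..., ss (2m),
  up to a nonzero normalising constant (irrelevant for non-vanishing).\<close>
definition wedge_eta_omega_pow ::
  "(('m \<Rightarrow> 'v) \<Rightarrow> ('m \<Rightarrow> real)) \<Rightarrow> (('m \<Rightarrow> 'v) \<Rightarrow> ('m \<Rightarrow> 'v) \<Rightarrow> ('m \<Rightarrow> real)) \<Rightarrow> nat
   \<Rightarrow> (nat \<Rightarrow> ('m \<Rightarrow> 'v)) \<Rightarrow> 'm \<Rightarrow> real" where
  "wedge_eta_omega_pow \<eta> \<omega> m ss x =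
     (\<Sum>\<sigma> \<in> {p. p permutes {0..2*m}}.
        of_int (sign \<sigma>) * \<eta> (ss (\<sigma> 0)) x *
        (\<Prod>i\<in>{1..m}. \<omega> (ss (\<sigma> (2*i - 1))) (ss (\<sigma> (2*i))) x))"

definition nowhere_vanishing_top ::
  "('m \<Rightarrow> 'v) set \<Rightarrow> (('m \<Rightarrow> 'v) \<Rightarrow> ('m \<Rightarrow> real)) \<Rightarrow> (('m \<Rightarrow> 'v) \<Rightarrow> ('m \<Rightarrow> 'v) \<Rightarrow> ('m \<Rightarrow> real))
   \<Rightarrow> nat \<Rightarrow> bool" where
  "nowhere_vanishing_top Gam \<eta> \<omega> m \<longleftrightarrow>
     (\<forall>x. \<exists>ss. (\<forall>i\<le>2*m. ss i \<in> Gam) \<and> wedge_eta_omega_pow \<eta> \<omega> m ss x \<noteq> 0)"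

definition contact_riemannian_lie_algebroid ::
  "('m \<Rightarrow> real) set \<Rightarrow> ('m \<Rightarrow> 'v::real_vector) set \<Rightarrow> nat
   \<Rightarrow> (('m \<Rightarrow> 'v) \<Rightarrow> ('m \<Rightarrow> real) \<Rightarrow> ('m \<Rightarrow> real)) \<Rightarrow> (('m \<Rightarrow> 'v) \<Rightarrow> ('m \<Rightarrow> 'v) \<Rightarrow> ('m \<Rightarrow> 'v))
   \<Rightarrow> (('m \<Rightarrow> 'v) \<Rightarrow> ('m \<Rightarrow> 'v)) \<Rightarrow> ('m \<Rightarrow> 'v) \<Rightarrow> (('m \<Rightarrow> 'v) \<Rightarrow> ('m \<Rightarrow> real))
   \<Rightarrow> (('m \<Rightarrow> 'v) \<Rightarrow> ('m \<Rightarrow> 'v) \<Rightarrow> ('m \<Rightarrow> real)) \<Rightarrow> bool" where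
  "contact_riemannian_lie_algebroid C Gam m \<rho> br F \<xi> \<eta> g \<longleftrightarrow>
     lie_algebroid C Gam (2*m+1) \<rho> br \<and>
     almost_contact_riemannian C Gam m F \<xi> \<eta> g \<and>
     nowhere_vanishing_top Gam \<eta> (d_E \<rho> br \<eta>) m \<and>
     (\<forall>s1\<in>Gam. \<forall>s2\<in>Gam. d_E \<rho> br \<eta> s1 s2 = fundamental_form F g s1 s2)"

end

theory Submission
  imports Defs
begin

text \<open>From \<open>F\<^sup>2 = -I + \<eta> \<otimes> \<xi>\<close> and \<open>\<eta>(\<xi>) = 1\<close> one gets, purely algebraically,
  \<open>F \<xi> = 0\<close> and \<open>\<eta> \<circ> F = 0\<close>; the compatibility of \<open>g\<close> then gives \<open>g(\<xi>, -) = \<eta>\<close>.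
  Hence \<open>i\<^sub>\<xi> d\<eta> = g(\<xi>, F -) = \<eta> \<circ> F = 0\<close>. Cartan's formula
  \<open>(\<L>\<^sub>s \<eta>)(t) = 2 d\<eta>(s, t) + \<rho>(t)(\<eta>(s))\<close> (the factor 2 compensates the \<open>1/2\<close> in \<open>d_E\<close>)
  then gives \<open>\<L>\<^sub>\<xi> \<eta> = 0\<close>, as \<open>\<eta>(\<xi>)\<close> is constant, and
  \<open>(\<L>\<^bsub>F s\<^sub>1\<^esub> \<eta>)(s\<^sub>2) = 2 g(F s\<^sub>1, F s\<^sub>2)\<close>, which is symmetric.
  Finally \<open>\<L>\<^sub>\<xi>\<close> commutes with \<open>d_E\<close> on any Lie algebroid (Jacobi identity and the anchor being
  a Lie algebra morphism), so \<open>\<L>\<^sub>\<xi> d\<eta> = d(\<L>\<^sub>\<xi> \<eta>) = 0\<close>.\<close>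

lemma lie_deriv_1_cartan:
  "lie_deriv_1 \<rho> br s \<eta> t = (\<lambda>x. 2 * d_E \<rho> br \<eta> s t x + \<rho> t (\<eta> s) x)"
  by (simp add: lie_deriv_1_def d_E_def fun_eq_iff algebra_simps)

context
  fixes C :: "('m \<Rightarrow> real) set" and Gam :: "('m \<Rightarrow> 'v::real_vector) set" and n :: nat
    and \<rho> :: "('m \<Rightarrow> 'v) \<Rightarrow> ('m \<Rightarrow> real) \<Rightarrow> ('m \<Rightarrow> real)"
    and br :: "('m \<Rightarrow> 'v) \<Rightarrow> ('m \<Rightarrow> 'v) \<Rightarrow> ('m \<Rightarrow> 'v)"
  assumes LA: "lie_algebroid C Gam n \<rho> br"
begin

lemma
  shows lie_algebroid_const: "(\<lambda>x. c) \<in> C"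
    and lie_algebroid_add_closed: "f \<in> C \<Longrightarrow> h \<in> C \<Longrightarrow> (\<lambda>x. f x + h x) \<in> C"
    and lie_algebroid_mult_closed: "f \<in> C \<Longrightarrow> h \<in> C \<Longrightarrow> (\<lambda>x. f x * h x) \<in> C"
    and lie_algebroid_anchor_closed: "s \<in> Gam \<Longrightarrow> f \<in> C \<Longrightarrow> \<rho> s f \<in> C"
    and lie_algebroid_anchor_add:
      "s \<in> Gam \<Longrightarrow> f \<in> C \<Longrightarrow> h \<in> C \<Longrightarrow> \<rho> s (\<lambda>x. f x + h x) = (\<lambda>x. \<rho> s f x + \<rho> s h x)"
    and lie_algebroid_anchor_cmult:
      "s \<in> Gam \<Longrightarrow> f \<in> C \<Longrightarrow> \<rho> s (\<lambda>x. c * f x) = (\<lambda>x. c * \<rho> s f x)"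
    and lie_algebroid_anchor_mult:
      "s \<in> Gam \<Longrightarrow> f \<in> C \<Longrightarrow> h \<in> C \<Longrightarrow>
        \<rho> s (\<lambda>x. f x * h x) = (\<lambda>x. f x * \<rho> s h x + h x * \<rho> s f x)"
    and lie_algebroid_bracket_closed: "s \<in> Gam \<Longrightarrow> t \<in> Gam \<Longrightarrow> br s t \<in> Gam"
  using LA unfolding lie_algebroid_def fun_algebra_def by - (elim conjE, blast)+

lemma lie_algebroid_anchor_const:
  assumes "s \<in> Gam"
  shows "\<rho> s (\<lambda>x. c) = (\<lambda>x. 0)"
proof -
  have "\<rho> s (\<lambda>x. 1) = (\<lambda>x. 0)"
    using lie_algebroid_anchor_mult[OF assms lie_algebroid_const lie_algebroid_const, of 1 1]
    by (simp add: fun_eq_iff)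
  then show ?thesis
    using lie_algebroid_anchor_cmult[OF assms lie_algebroid_const[of 1], of c] by simp
qed

lemma lie_algebroid_anchor_diff:
  assumes "s \<in> Gam" "f \<in> C" "h \<in> C"
  shows "\<rho> s (\<lambda>x. f x - h x) = (\<lambda>x. \<rho> s f x - \<rho> s h x)"
  using lie_algebroid_anchor_add[OF assms(1,2) lie_algebroid_mult_closed[OF lie_algebroid_const assms(3)], of "-1"]
    lie_algebroid_anchor_cmult[OF assms(1,3), of "-1"]
  by simp

lemma lie_algebroid_diff_closed: "f \<in> C \<Longrightarrow> h \<in> C \<Longrightarrow> (\<lambda>x. f x - h x) \<in> C"
  using lie_algebroid_add_closed lie_algebroid_mult_closed[OF lie_algebroid_const, of h "-1"]
  by fastforce

lemma lie_algebroid_jacobi: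
  assumes "s \<in> Gam" "t \<in> Gam" "u \<in> Gam"
  shows "br s (br t u) = (\<lambda>x. br (br s t) u x + br t (br s u) x)"
proof -
  have "\<forall>s\<in>Gam. \<forall>t\<in>Gam. \<forall>u\<in>Gam. br s (br t u) = (\<lambda>x. br (br s t) u x + br t (br s u) x)"
    using LA unfolding lie_algebroid_def by (elim conjE) assumption
  then show ?thesis
    using assms by blast
qed

lemma lie_algebroid_anchor_bracket:
  assumes "s \<in> Gam" "t \<in> Gam" "f \<in> C"
  shows "\<rho> (br s t) f = (\<lambda>x. \<rho> s (\<rho> t f) x - \<rho> t (\<rho> s f) x)"
proof -
  have "\<forall>s\<in>Gam. \<forall>t\<in>Gam. \<forall>f\<in>C. \<rho> (br s t) f = (\<lambda>x. \<rho> s (\<rho> t f) x - \<rho> t (\<rho> s f) x)"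
    using LA unfolding lie_algebroid_def by (elim conjE) assumption
  then show ?thesis
    using assms by blast
qed

lemma lie_deriv_2_d_E:
  assumes \<eta>: "one_form C Gam \<eta>" and s: "\<xi> \<in> Gam" "s1 \<in> Gam" "s2 \<in> Gam"
  shows "lie_deriv_2 \<rho> br \<xi> (d_E \<rho> br \<eta>) s1 s2 = d_E \<rho> br (lie_deriv_1 \<rho> br \<xi> \<eta>) s1 s2"
proof -
  have \<eta>C: "\<And>t. t \<in> Gam \<Longrightarrow> \<eta> t \<in> C" and
    \<eta>_add: "\<And>t u. t \<in> Gam \<Longrightarrow> u \<in> Gam \<Longrightarrow> \<eta> (\<lambda>x. t x + u x) = (\<lambda>x. \<eta> t x + \<eta> u x)"
    using \<eta> unfolding one_form_def by blast+
  note brG = lie_algebroid_bracket_closed and \<rho>C = lie_algebroid_anchor_closed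
    and diffC = lie_algebroid_diff_closed and \<rho>_diff = lie_algebroid_anchor_diff
  have A: "\<rho> s1 (\<eta> s2) \<in> C" and B: "\<rho> s2 (\<eta> s1) \<in> C" and D: "\<eta> (br s1 s2) \<in> C"
    using s by (simp_all add: \<rho>C \<eta>C brG)
  have \<rho>\<xi>_d_E: "\<rho> \<xi> (d_E \<rho> br \<eta> s1 s2) = (\<lambda>x. (1/2) * (\<rho> \<xi> (\<rho> s1 (\<eta> s2)) x
      - \<rho> \<xi> (\<rho> s2 (\<eta> s1)) x - \<rho> \<xi> (\<eta> (br s1 s2)) x))"
    unfolding d_E_def lie_algebroid_anchor_cmult[OF s(1) diffC[OF diffC[OF A B] D]]
      \<rho>_diff[OF s(1) diffC[OF A B] D] \<rho>_diff[OF s(1) A B] ..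
  have \<rho>_lie_deriv: "\<rho> t (lie_deriv_1 \<rho> br \<xi> \<eta> u) = (\<lambda>x. \<rho> t (\<rho> \<xi> (\<eta> u)) x - \<rho> t (\<eta> (br \<xi> u)) x)"
    if "t \<in> Gam" "u \<in> Gam" for t u
    unfolding lie_deriv_1_def
    by (rule \<rho>_diff[OF that(1) \<rho>C[OF s(1) \<eta>C[OF that(2)]] \<eta>C[OF brG[OF s(1) that(2)]]])
  have \<eta>_jacobi: "\<eta> (br \<xi> (br s1 s2)) = (\<lambda>x. \<eta> (br (br \<xi> s1) s2) x + \<eta> (br s1 (br \<xi> s2)) x)"
    unfolding lie_algebroid_jacobi[OF s]
    by (rule \<eta>_add[OF brG[OF brG[OF s(1,2)] s(3)] brG[OF s(2) brG[OF s(1,3)]]])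
  show ?thesis
    unfolding lie_deriv_2_def d_E_def lie_deriv_1_def fun_eq_iff
    by (simp only: \<rho>\<xi>_d_E[unfolded d_E_def] \<rho>_lie_deriv[OF s(2,3), unfolded lie_deriv_1_def]
        \<rho>_lie_deriv[OF s(3,2), unfolded lie_deriv_1_def] \<eta>_jacobi
        lie_algebroid_anchor_bracket[OF s(1,2) \<eta>C[OF s(3)]]
        lie_algebroid_anchor_bracket[OF s(1,3) \<eta>C[OF s(2)]])
      (simp add: algebra_simps)
qed

lemma d_E_zero_form:
  assumes "\<forall>t\<in>Gam. \<omega> t = (\<lambda>x. 0)" "s1 \<in> Gam" "s2 \<in> Gam"
  shows "d_E \<rho> br \<omega> s1 s2 = (\<lambda>x. 0)"
  using assms lie_algebroid_bracket_closed[OF assms(2,3)]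
    lie_algebroid_anchor_const[of s1 0] lie_algebroid_anchor_const[of s2 0]
  by (simp add: d_E_def)

end

context
  fixes C :: "('m \<Rightarrow> real) set" and Gam :: "('m \<Rightarrow> 'v::real_vector) set" and m :: nat
    and F :: "('m \<Rightarrow> 'v) \<Rightarrow> ('m \<Rightarrow> 'v)" and \<xi> :: "'m \<Rightarrow> 'v"
    and \<eta> :: "('m \<Rightarrow> 'v) \<Rightarrow> ('m \<Rightarrow> real)"
    and g :: "('m \<Rightarrow> 'v) \<Rightarrow> ('m \<Rightarrow> 'v) \<Rightarrow> ('m \<Rightarrow> real)"
  assumes ACR: "almost_contact_riemannian C Gam m F \<xi> \<eta> g"
begin

lemma
  shows almost_contact_F_closed: "s \<in> Gam \<Longrightarrow> F s \<in> Gam"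
    and almost_contact_F_add: "s \<in> Gam \<Longrightarrow> t \<in> Gam \<Longrightarrow> F (\<lambda>x. s x + t x) = (\<lambda>x. F s x + F t x)"
    and almost_contact_F_smul: "f \<in> C \<Longrightarrow> s \<in> Gam \<Longrightarrow> F (smul f s) = smul f (F s)"
    and almost_contact_xi_in: "\<xi> \<in> Gam"
    and almost_contact_one_form: "one_form C Gam \<eta>"
    and almost_contact_metric_sym: "s \<in> Gam \<Longrightarrow> t \<in> Gam \<Longrightarrow> g s t = g t s"
    and almost_contact_metric_add:
      "s \<in> Gam \<Longrightarrow> t \<in> Gam \<Longrightarrow> u \<in> Gam \<Longrightarrow> g (\<lambda>x. s x + t x) u = (\<lambda>x. g s u x + g t u x)"
    and almost_contact_F_F: "s \<in> Gam \<Longrightarrow> F (F s) = (\<lambda>x. - s x + \<eta> s x *\<^sub>R \<xi> x)"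
    and almost_contact_eta_xi: "\<eta> \<xi> = (\<lambda>x. 1)"
    and almost_contact_metric_F:
      "s \<in> Gam \<Longrightarrow> t \<in> Gam \<Longrightarrow> g (F s) (F t) = (\<lambda>x. g s t x - \<eta> s x * \<eta> t x)"
  using ACR unfolding almost_contact_riemannian_def by auto

lemma almost_contact_eta_closed: "s \<in> Gam \<Longrightarrow> \<eta> s \<in> C"
  using almost_contact_one_form unfolding one_form_def by blast

lemma almost_contact_eta_add:
  "s \<in> Gam \<Longrightarrow> t \<in> Gam \<Longrightarrow> \<eta> (\<lambda>x. s x + t x) = (\<lambda>x. \<eta> s x + \<eta> t x)"
  using almost_contact_one_form unfolding one_form_def by blast

lemma almost_contact_eta_smul: "f \<in> C \<Longrightarrow> s \<in> Gam \<Longrightarrow> \<eta> (smul f s) = (\<lambda>x. f x * \<eta> s x)"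
  using almost_contact_one_form unfolding one_form_def by blast

lemma almost_contact_zero_in: "(\<lambda>x. 0) \<in> Gam"
  using almost_contact_F_closed[OF almost_contact_F_closed[OF almost_contact_xi_in]]
  by (simp add: almost_contact_F_F[OF almost_contact_xi_in] almost_contact_eta_xi)

lemma almost_contact_F_zero: "F (\<lambda>x. 0) = (\<lambda>x. 0)"
  using almost_contact_F_add[OF almost_contact_zero_in almost_contact_zero_in]
  by (simp add: fun_eq_iff)

lemma almost_contact_eta_zero: "\<eta> (\<lambda>x. 0) = (\<lambda>x. 0)"
  using almost_contact_eta_add[OF almost_contact_zero_in almost_contact_zero_in]
  by (simp add: fun_eq_iff)

lemma almost_contact_metric_zero: "t \<in> Gam \<Longrightarrow> g (\<lambda>x. 0) t = (\<lambda>x. 0)"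
  using almost_contact_metric_add[OF almost_contact_zero_in almost_contact_zero_in]
  by (simp add: fun_eq_iff)

lemma almost_contact_eta_smul_xi: "f \<in> C \<Longrightarrow> \<eta> (smul f \<xi>) = f"
  using almost_contact_eta_smul[OF _ almost_contact_xi_in] by (simp add: almost_contact_eta_xi)

lemma almost_contact_F_xi: "F \<xi> = (\<lambda>x. 0)"
proof -
  note \<xi> = almost_contact_xi_in
  define a where "a = \<eta> (F \<xi>)"
  have a: "a \<in> C"
    unfolding a_def by (rule almost_contact_eta_closed[OF almost_contact_F_closed[OF \<xi>]])
  have FF\<xi>: "F (F \<xi>) = (\<lambda>x. 0)"
    by (simp add: almost_contact_F_F[OF \<xi>] almost_contact_eta_xi)
  have "F (F (F \<xi>)) = (\<lambda>x. - F \<xi> x + a x *\<^sub>R \<xi> x)"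
    unfolding a_def by (rule almost_contact_F_F[OF almost_contact_F_closed[OF \<xi>]])
  then have F\<xi>: "F \<xi> = smul a \<xi>"
    by (simp add: FF\<xi> almost_contact_F_zero smul_def fun_eq_iff)
  have "(\<lambda>x. 0) = \<eta> (F (F \<xi>))"
    by (simp add: FF\<xi> almost_contact_eta_zero)
  also have "\<dots> = \<eta> (smul a (F \<xi>))"
    unfolding F\<xi> almost_contact_F_smul[OF a \<xi>] ..
  also have "\<dots> = (\<lambda>x. a x * a x)"
    using almost_contact_eta_smul[OF a almost_contact_F_closed[OF \<xi>]] a_def by simp
  finally have "a = (\<lambda>x. 0)"
    by (simp add: fun_eq_iff)
  then show ?thesis
    by (simp add: F\<xi> smul_def)
qed

lemma almost_contact_eta_F:
  assumes s: "s \<in> Gam"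
  shows "\<eta> (F s) = (\<lambda>x. 0)"
proof -
  note \<xi> = almost_contact_xi_in and FG = almost_contact_F_closed
  have "(\<lambda>x. F (F (F s)) x + F s x) = F (\<lambda>x. F (F s) x + s x)"
    by (rule almost_contact_F_add[OF FG[OF FG[OF s]] s, symmetric])
  also have "\<dots> = F (smul (\<eta> s) \<xi>)"
    by (simp add: almost_contact_F_F[OF s] smul_def)
  also have "\<dots> = smul (\<eta> s) (F \<xi>)"
    by (rule almost_contact_F_smul[OF almost_contact_eta_closed[OF s] \<xi>])
  finally have "(\<lambda>x. F (F (F s)) x + F s x) = smul (\<eta> s) (F \<xi>)" .
  then have "smul (\<eta> (F s)) \<xi> = (\<lambda>x. 0)"
    by (simp add: almost_contact_F_F[OF FG[OF s]] almost_contact_F_xi smul_def fun_eq_iff)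
  then show ?thesis
    using almost_contact_eta_smul_xi[OF almost_contact_eta_closed[OF FG[OF s]]]
    by (simp add: almost_contact_eta_zero)
qed

lemma almost_contact_metric_xi: "s \<in> Gam \<Longrightarrow> g \<xi> s = \<eta> s"
  using almost_contact_metric_F[OF almost_contact_xi_in, of s]
    almost_contact_metric_zero[OF almost_contact_F_closed, of s]
  by (simp add: almost_contact_F_xi almost_contact_eta_xi fun_eq_iff)

end

theorem proposition4p3:
  fixes C :: "('m \<Rightarrow> real) set" and Gam :: "('m \<Rightarrow> 'v::real_vector) set" and m :: nat
    and \<rho> :: "('m \<Rightarrow> 'v) \<Rightarrow> ('m \<Rightarrow> real) \<Rightarrow> ('m \<Rightarrow> real)"
    and br :: "('m \<Rightarrow> 'v) \<Rightarrow> ('m \<Rightarrow> 'v) \<Rightarrow> ('m \<Rightarrow> 'v)"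
    and F :: "('m \<Rightarrow> 'v) \<Rightarrow> ('m \<Rightarrow> 'v)" and \<xi> :: "'m \<Rightarrow> 'v"
    and \<eta> :: "('m \<Rightarrow> 'v) \<Rightarrow> ('m \<Rightarrow> real)"
    and g :: "('m \<Rightarrow> 'v) \<Rightarrow> ('m \<Rightarrow> 'v) \<Rightarrow> ('m \<Rightarrow> real)"
  assumes "contact_riemannian_lie_algebroid C Gam m \<rho> br F \<xi> \<eta> g"
  shows "(\<forall>s\<in>Gam. lie_deriv_1 \<rho> br \<xi> \<eta> s = (\<lambda>x. 0))
    \<and> (\<forall>s1\<in>Gam. \<forall>s2\<in>Gam. lie_deriv_2 \<rho> br \<xi> (d_E \<rho> br \<eta>) s1 s2 = (\<lambda>x. 0))
    \<and> (\<forall>s1\<in>Gam. \<forall>s2\<in>Gam. lie_deriv_1 \<rho> br (F s1) \<eta> s2 = lie_deriv_1 \<rho> br (F s2) \<eta> s1)"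
proof -
  have LA: "lie_algebroid C Gam (2*m+1) \<rho> br"
    and ACR: "almost_contact_riemannian C Gam m F \<xi> \<eta> g"
    and d\<eta>: "\<And>s1 s2. s1 \<in> Gam \<Longrightarrow> s2 \<in> Gam \<Longrightarrow> d_E \<rho> br \<eta> s1 s2 = g s1 (F s2)"
    using assms unfolding contact_riemannian_lie_algebroid_def fundamental_form_def by blast+
  note \<xi> = almost_contact_xi_in[OF ACR] and FG = almost_contact_F_closed[OF ACR]
    and \<eta>F = almost_contact_eta_F[OF ACR] and \<rho>_const = lie_algebroid_anchor_const[OF LA]
  have L\<xi>\<eta>: "\<forall>s\<in>Gam. lie_deriv_1 \<rho> br \<xi> \<eta> s = (\<lambda>x. 0)"
    by (simp add: lie_deriv_1_cartan d\<eta> \<xi> FG \<eta>F \<rho>_const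
        almost_contact_metric_xi[OF ACR] almost_contact_eta_xi[OF ACR])
  moreover have "\<forall>s1\<in>Gam. \<forall>s2\<in>Gam. lie_deriv_2 \<rho> br \<xi> (d_E \<rho> br \<eta>) s1 s2 = (\<lambda>x. 0)"
    by (simp add: lie_deriv_2_d_E[OF LA almost_contact_one_form[OF ACR] \<xi>]
        d_E_zero_form[OF LA L\<xi>\<eta>])
  moreover have "\<forall>s1\<in>Gam. \<forall>s2\<in>Gam. lie_deriv_1 \<rho> br (F s1) \<eta> s2 = lie_deriv_1 \<rho> br (F s2) \<eta> s1"
    by (simp add: lie_deriv_1_cartan d\<eta> FG \<eta>F \<rho>_const almost_contact_metric_sym[OF ACR])
  ultimately show ?thesis
    by blast
qed

end
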